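(* Let $D$ be a pv-monoid (idempotent, with symmetric valuation function) that is left-$\oplus$-distributive, $P$ a nonempty finite set of ports, and $\zeta,\zeta_1,\zeta_2\in PCL(D,P)$. Then $\zeta\uplus(\zeta_1\oplus\zeta_2)\equiv(\zeta\uplus\zeta_1)\oplus(\zeta\uplus\zeta_2)$.
   Context: A valuation monoid $(D,\oplus,\mathrm{val},0)$ consists of a commutative monoid $(D,\oplus,0)$ and a map $\mathrm{val}:D^+\to D$ ($D^+$ = nonempty finite sequences over $D$) with $\mathrm{val}(d)=d$ and $\mathrm{val}(d_1,\dots,d_n)=0$ whenever some $d_i=0$. A pv-monoid $(D,\oplus,\mathrm{val},\otimes,0,1)$ is a valuation monoid with a binary operation $\otimes$ and an element $1$ such that $\mathrm{val}(1,\dots,1)=1$ for any $n\ge1$ arguments, $0\otimes d=d\otimes0=0$, $1\otimes d=d\otimes1=d$. Standing assumption: $D$ is idempotent and $\mathrm{val}$ is symmetric. $D$ is left-$\oplus$-distributive if $d\otimes(d_1\oplus d_2)=(d\otimes d_1)\oplus(d\otimes d_2)$ for all $d,d_1,d_2$. $I(P)$ is the set of nonempty subsets of $P$, $C(P)$ the set of nonempty subsets of $I(P)$. PIL formulas: $\phi::=true\mid p\mid\overline{\phi}\mid\phi\vee\phi$ ($p\in P$), $\alpha\models_i p$ iff $p\in\alpha$, other connectives as usual. PCL formulas: $f::=true\mid\phi\mid\neg f\mid f\sqcup f\mid f+f$; $\gamma\models\phi$ iff every $\alpha\in\gamma$ satisfies $\phi$; $\neg,\sqcup$ are complement and union; $\gamma\models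 f_1+f_2$ iff $\gamma=\gamma_1\cup\gamma_2$ with $\gamma_1,\gamma_2\in C(P)$, $\gamma_1\models f_1,\gamma_2\models f_2$. w$_{\text{pvm}}$PCL formulas ($PCL(D,P)$): $\zeta::=d\mid f\mid\zeta\oplus\zeta\mid\zeta\otimes\zeta\mid\zeta\uplus\zeta\mid *\zeta$; semantics $\|\zeta\|:C(P)\to D$: $\|d\|(\gamma)=d$; $\|f\|(\gamma)\in\{0,1\}$ is $1$ iff $\gamma\models f$; $\oplus,\otimes$ pointwise; $\|\zeta_1\uplus\zeta_2\|(\gamma)=\bigoplus(\|\zeta_1\|(\gamma_1)\otimes\|\zeta_2\|(\gamma_2))$ over disjoint $\gamma_1,\gamma_2\in C(P)$ with union $\gamma$; $\|*\zeta\|(\gamma)=\bigoplus_{n>0}\bigoplus\mathrm{val}(\|\zeta\|(\gamma_1),\dots,\|\zeta\|(\gamma_n))$ over pairwise disjoint $\gamma_1,\dots,\gamma_n\in C(P)$ with union $\gamma$. $\equiv$ means equality of semantics on all of $C(P)$. An empty $\oplus$-sum is $0$. *)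

theory Defs
  imports Main "HOL-Library.Multiset"
begin

record 'd pvm =
  dplus :: "'d \<Rightarrow> 'd \<Rightarrow> 'd"
  dval :: "'d list \<Rightarrow> 'd"
  dtimes :: "'d \<Rightarrow> 'd \<Rightarrow> 'd"
  dzero :: 'd
  dunit :: 'd

text \<open>Valuation monoid + pv-monoid axioms (val is only meaningful on nonempty lists).\<close>
definition pv_monoid :: "'d pvm \<Rightarrow> bool" where
  "pv_monoid D \<longleftrightarrow>
     (\<forall>a b c. dplus D (dplus D a b) c = dplus D a (dplus D b c)) \<and>
     (\<forall>a b. dplus D a b = dplus D b a) \<and>
     (\<forall>a. dplus D (dzero D) a = a) \<and>
     (\<forall>d. dval D [d] = d) \<and>
     (\<forall>ds. ds \<noteq> [] \<and> dzero D \<in> set ds \<longrightarrow> dval D ds = dzero D) \<and>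
     (\<forall>n>0. dval D (replicate n (dunit D)) = dunit D) \<and>
     (\<forall>d. dtimes D (dzero D) d = dzero D \<and> dtimes D d (dzero D) = dzero D) \<and>
     (\<forall>d. dtimes D (dunit D) d = d \<and> dtimes D d (dunit D) = d)"

definition pvm_idempotent :: "'d pvm \<Rightarrow> bool" where
  "pvm_idempotent D \<longleftrightarrow> (\<forall>d. dplus D d d = d)"

definition pvm_symmetric_val :: "'d pvm \<Rightarrow> bool" where
  "pvm_symmetric_val D \<longleftrightarrow>
     (\<forall>ds ds'. ds \<noteq> [] \<and> mset ds = mset ds' \<longrightarrow> dval D ds = dval D ds')"

definition pvm_left_distrib :: "'d pvm \<Rightarrow> bool" where
  "pvm_left_distrib D \<longleftrightarrow>
     (\<forall>d d1 d2. dtimes D d (dplus D d1 d2) = dplus D (dtimes D d d1) (dtimes D d d2))"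

definition bigsum :: "'d pvm \<Rightarrow> ('a \<Rightarrow> 'd) \<Rightarrow> 'a set \<Rightarrow> 'd" where
  "bigsum D g A = Finite_Set.fold (\<lambda>x acc. dplus D (g x) acc) (dzero D) A"

definition interactions :: "'p set \<Rightarrow> 'p set set" where
  "interactions P = {\<alpha>. \<alpha> \<subseteq> P \<and> \<alpha> \<noteq> {}}"

definition configs :: "'p set \<Rightarrow> 'p set set set" where
  "configs P = {\<gamma>. \<gamma> \<subseteq> interactions P \<and> \<gamma> \<noteq> {}}"

datatype 'p pil = PTrue | PPort 'p | PNeg "'p pil" | POr "'p pil" "'p pil"

primrec pil_sat :: "'p set \<Rightarrow> 'p pil \<Rightarrow> bool" where
  "pil_sat \<alpha> PTrue = True"
| "pil_sat \<alpha> (PPort p) = (p \<in> \<alpha>)"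
| "pil_sat \<alpha> (PNeg \<phi>) = (\<not> pil_sat \<alpha> \<phi>)"
| "pil_sat \<alpha> (POr \<phi> \<psi>) = (pil_sat \<alpha> \<phi> \<or> pil_sat \<alpha> \<psi>)"

primrec pil_ports :: "'p pil \<Rightarrow> 'p set" where
  "pil_ports PTrue = {}"
| "pil_ports (PPort p) = {p}"
| "pil_ports (PNeg \<phi>) = pil_ports \<phi>"
| "pil_ports (POr \<phi> \<psi>) = pil_ports \<phi> \<union> pil_ports \<psi>"

datatype 'p pcl = CTrue | CPil "'p pil" | CNot "'p pcl" | CUnion "'p pcl" "'p pcl"
  | CPlus "'p pcl" "'p pcl"

primrec pcl_sat :: "'p set \<Rightarrow> 'p set set \<Rightarrow> 'p pcl \<Rightarrow> bool" where
  "pcl_sat P \<gamma> CTrue = True"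
| "pcl_sat P \<gamma> (CPil \<phi>) = (\<forall>\<alpha>\<in>\<gamma>. pil_sat \<alpha> \<phi>)"
| "pcl_sat P \<gamma> (CNot f) = (\<not> pcl_sat P \<gamma> f)"
| "pcl_sat P \<gamma> (CUnion f g) = (pcl_sat P \<gamma> f \<or> pcl_sat P \<gamma> g)"
| "pcl_sat P \<gamma> (CPlus f g) = (\<exists>\<gamma>1\<in>configs P. \<exists>\<gamma>2\<in>configs P.
      \<gamma> = \<gamma>1 \<union> \<gamma>2 \<and> pcl_sat P \<gamma>1 f \<and> pcl_sat P \<gamma>2 g)"

primrec pcl_ports :: "'p pcl \<Rightarrow> 'p set" where
  "pcl_ports CTrue = {}"
| "pcl_ports (CPil \<phi>) = pil_ports \<phi>"
| "pcl_ports (CNot f) = pcl_ports f"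
| "pcl_ports (CUnion f g) = pcl_ports f \<union> pcl_ports g"
| "pcl_ports (CPlus f g) = pcl_ports f \<union> pcl_ports g"

datatype ('d, 'p) wpcl = WConst 'd | WPcl "'p pcl"
  | WPlus "('d, 'p) wpcl" "('d, 'p) wpcl"
  | WTimes "('d, 'p) wpcl" "('d, 'p) wpcl"
  | WUplus "('d, 'p) wpcl" "('d, 'p) wpcl"
  | WStar "('d, 'p) wpcl"

primrec wpcl_ports :: "('d, 'p) wpcl \<Rightarrow> 'p set" where
  "wpcl_ports (WConst d) = {}"
| "wpcl_ports (WPcl f) = pcl_ports f"
| "wpcl_ports (WPlus z1 z2) = wpcl_ports z1 \<union> wpcl_ports z2"
| "wpcl_ports (WTimes z1 z2) = wpcl_ports z1 \<union> wpcl_ports z2"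
| "wpcl_ports (WUplus z1 z2) = wpcl_ports z1 \<union> wpcl_ports z2"
| "wpcl_ports (WStar z) = wpcl_ports z"

definition in_PCL :: "'p set \<Rightarrow> ('d, 'p) wpcl \<Rightarrow> bool" where
  "in_PCL P z \<longleftrightarrow> wpcl_ports z \<subseteq> P"

primrec wsem :: "'d pvm \<Rightarrow> 'p set \<Rightarrow> ('d, 'p) wpcl \<Rightarrow> 'p set set \<Rightarrow> 'd" where
  "wsem D P (WConst d) = (\<lambda>\<gamma>. d)"
| "wsem D P (WPcl f) = (\<lambda>\<gamma>. if pcl_sat P \<gamma> f then dunit D else dzero D)"
| "wsem D P (WPlus z1 z2) = (\<lambda>\<gamma>. dplus D (wsem D P z1 \<gamma>) (wsem D P z2 \<gamma>))"
| "wsem D P (WTimes z1 z2) = (\<lambda>\<gamma>. dtimes D (wsem D P z1 \<gamma>) (wsem D P z2 \<gamma>))"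
| "wsem D P (WUplus z1 z2) = (\<lambda>\<gamma>. bigsum D
      (\<lambda>(\<gamma>1, \<gamma>2). dtimes D (wsem D P z1 \<gamma>1) (wsem D P z2 \<gamma>2))
      {(\<gamma>1, \<gamma>2). \<gamma>1 \<in> configs P \<and> \<gamma>2 \<in> configs P \<and> \<gamma>1 \<inter> \<gamma>2 = {} \<and> \<gamma>1 \<union> \<gamma>2 = \<gamma>})"
| "wsem D P (WStar z) = (\<lambda>\<gamma>. bigsum D
      (\<lambda>gs. dval D (map (wsem D P z) gs))
      {gs. gs \<noteq> [] \<and> set gs \<subseteq> configs P \<and>
           (\<forall>i<length gs. \<forall>j<length gs. i \<noteq> j \<longrightarrow> gs ! i \<inter> gs ! j = {}) \<and>
           \<Union>(set gs) = \<gamma>})"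

definition wequiv :: "'d pvm \<Rightarrow> 'p set \<Rightarrow> ('d, 'p) wpcl \<Rightarrow> ('d, 'p) wpcl \<Rightarrow> bool" where
  "wequiv D P z z' \<longleftrightarrow> (\<forall>\<gamma>\<in>configs P. wsem D P z \<gamma> = wsem D P z' \<gamma>)"

end

theory Submission
  imports Defs
begin

text \<open>Both sides of the equivalence sum over the same set of splittings
  \<open>\<gamma> = \<gamma>\<^sub>1 \<union> \<gamma>\<^sub>2\<close>. Left \<open>\<oplus>\<close>-distributivity splits every summand
  \<open>\<zeta>(\<gamma>\<^sub>1) \<otimes> (\<zeta>\<^sub>1(\<gamma>\<^sub>2) \<oplus> \<zeta>\<^sub>2(\<gamma>\<^sub>2))\<close> into two, and a \<open>\<oplus>\<close>-sum of pointwise sums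
  is the sum of the two \<open>\<oplus>\<close>-sums because \<open>\<oplus>\<close> is associative and commutative.\<close>

lemma pv_monoid_comm_monoid_set:
  assumes "pv_monoid D"
  shows "comm_monoid_set (dplus D) (dzero D)"
  by unfold_locales (use assms in \<open>auto simp: pv_monoid_def\<close>)

lemma bigsum_eq_comm_monoid_set_F:
  assumes "pv_monoid D"
  shows "bigsum D g A = comm_monoid_set.F (dplus D) (dzero D) g A"
proof -
  interpret comm_monoid_set "dplus D" "dzero D"
    using assms by (rule pv_monoid_comm_monoid_set)
  show ?thesis
    by (simp add: bigsum_def eq_fold comp_def)
qed

lemma bigsum_dplus_distrib:
  assumes "pv_monoid D"
  shows "bigsum D (\<lambda>x. dplus D (g x) (h x)) A = dplus D (bigsum D g A) (bigsum D h A)"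
  using comm_monoid_set.distrib[OF pv_monoid_comm_monoid_set[OF assms]]
  by (simp add: bigsum_eq_comm_monoid_set_F[OF assms])

lemma wsem_WUplus_WPlus:
  assumes "pv_monoid D" and "pvm_left_distrib D"
  shows "wsem D P (WUplus z (WPlus z1 z2)) \<gamma>
    = dplus D (wsem D P (WUplus z z1) \<gamma>) (wsem D P (WUplus z z2) \<gamma>)"
proof -
  let ?summand = "\<lambda>z' (\<gamma>1, \<gamma>2). dtimes D (wsem D P z \<gamma>1) (wsem D P z' \<gamma>2)"
  let ?splittings = "{(\<gamma>1, \<gamma>2). \<gamma>1 \<in> configs P \<and> \<gamma>2 \<in> configs P \<and> \<gamma>1 \<inter> \<gamma>2 = {} \<and> \<gamma>1 \<union> \<gamma>2 = \<gamma>}"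
  have summand_split: "?summand (WPlus z1 z2) = (\<lambda>x. dplus D (?summand z1 x) (?summand z2 x))"
    using assms(2) by (auto simp: pvm_left_distrib_def)
  have "wsem D P (WUplus z (WPlus z1 z2)) \<gamma> = bigsum D (?summand (WPlus z1 z2)) ?splittings"
    by simp
  also have "\<dots> = dplus D (bigsum D (?summand z1) ?splittings) (bigsum D (?summand z2) ?splittings)"
    unfolding summand_split by (rule bigsum_dplus_distrib[OF assms(1)])
  also have "\<dots> = dplus D (wsem D P (WUplus z z1) \<gamma>) (wsem D P (WUplus z z2) \<gamma>)"
    by simp
  finally show ?thesis .
qed

theorem mainTheorem6:
  fixes D :: "'d pvm" and P :: "'p set" and z z1 z2 :: "('d, 'p) wpcl"
  assumes "pv_monoid D" and "pvm_idempotent D" and "pvm_symmetric_val D"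
    and "pvm_left_distrib D"
    and "finite P" and "P \<noteq> {}"
    and "in_PCL P z" and "in_PCL P z1" and "in_PCL P z2"
  shows "wequiv D P (WUplus z (WPlus z1 z2)) (WPlus (WUplus z z1) (WUplus z z2))"
  unfolding wequiv_def wsem.simps(3) wsem_WUplus_WPlus[OF assms(1,4)] by simp

end
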